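(* Under Assumption A, let $\alpha>0$, let $\boldsymbol z^*\in\mathcal Z$ be any saddle point of $\max_{\boldsymbol\sigma\ge0,\boldsymbol\lambda}\min_{\boldsymbol x\in\mathcal X}\mathcal L$, and for $\boldsymbol z\in\mathcal Z$ put $\boldsymbol y=\boldsymbol z-\alpha\boldsymbol\Omega(\boldsymbol z)$ and $V(\boldsymbol z)=\tfrac12\|\boldsymbol z-\boldsymbol z^*\|^2+\alpha(\boldsymbol z-\mathrm{Proj}_{\mathcal Z}(\boldsymbol y))^\top\boldsymbol\Omega(\boldsymbol z)-\tfrac12\|\boldsymbol z-\mathrm{Proj}_{\mathcal Z}(\boldsymbol y)\|^2$. Then: (A) for all $\boldsymbol z\in\mathcal Z$, $V(\boldsymbol z)\ge\tfrac12\big(\|\boldsymbol z-\mathrm{Proj}_{\mathcal Z}(\boldsymbol y)\|^2+\|\boldsymbol z-\boldsymbol z^*\|^2\big)\ge0$; (B) $V$ is continuously differentiable on $\mathcal Z$ and its derivative along the dynamics $\dot{\boldsymbol z}=\boldsymbol f(\boldsymbol z)=\mathrm{Proj}_{\mathcal Z}(\boldsymbol z-\alpha\boldsymbol\Omega(\boldsymbol z))-\boldsymbol z$ satisfies, for all $\boldsymbol z\in\mathcal Z$, $\frac{dV}{dt}=\nabla V(\boldsymbol z)^\top\boldsymbol f(\boldsymbol z)\le-\alpha(\boldsymbol z-\boldsymbol z^* )^\top\boldsymbol\Omega(\boldsymbol z)\le0$.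
   Context: General problem (GP): minimize $c(\boldsymbol x)$ over $\boldsymbol x\in\mathcal X\subseteq\mathbb R^n$ subject to $\boldsymbol h(\boldsymbol x)=\boldsymbol0$ and $\boldsymbol g(\boldsymbol x)\le\boldsymbol0$, where $c:\mathbb R^n\to\mathbb R$, $\boldsymbol h:\mathbb R^n\to\mathbb R^l$ is affine, and $\boldsymbol g:\mathbb R^n\to\mathbb R^m$. Assumption A: $\mathcal X$ is nonempty, closed and convex; $c$ and each component of $\boldsymbol g$ are convex, twice continuously differentiable, with locally Lipschitz gradients on $\mathcal X$; $\boldsymbol h$ is affine; (GP) is feasible and Slater's condition holds. Lagrangian: $\mathcal L(\boldsymbol x,\boldsymbol\lambda,\boldsymbol\sigma)=c(\boldsymbol x)+\boldsymbol\lambda^\top\boldsymbol h(\boldsymbol x)+\boldsymbol\sigma^\top\boldsymbol g(\boldsymbol x)$. Let $\boldsymbol z=(\boldsymbol x,\boldsymbol\lambda,\boldsymbol\sigma)$, $\mathcal Z=\mathcal X\times\mathbb R^l\times\mathbb R^m_{\ge0}$, and $\boldsymbol\Omega(\boldsymbol z)=(\nabla_{\boldsymbol x}\mathcal L,\,-\nabla_{\boldsymbol\lambda}\mathcal L,\,-\nabla_{\boldsymbol\sigma}\mathcal L)=(\nabla c(\boldsymbol x)+\nabla\boldsymbol h(\boldsymbol x)^\top\boldsymbol\lambda+\nabla\boldsymbol g(\boldsymbol x)^\top\boldsymbol\sigma,\,-\boldsymbol h(\boldsymbol x),\,-\boldsymbol g(\boldsymbol x))$. $\mathrm{Proj}_{\mathcal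 Z}$ denotes Euclidean projection onto $\mathcal Z$. *)

theory Defs
  imports "HOL-Analysis.Analysis"
begin

definition C2_with_grad :: "('a::euclidean_space \<Rightarrow> real) \<Rightarrow> ('a \<Rightarrow> 'a) \<Rightarrow> bool" where
  "C2_with_grad f gf \<longleftrightarrow>
     (\<forall>x. (f has_derivative (\<lambda>v. gf x \<bullet> v)) (at x)) \<and>
     (\<exists>D :: 'a \<Rightarrow> ('a \<Rightarrow>\<^sub>L 'a).
        (\<forall>x. (gf has_derivative blinfun_apply (D x)) (at x)) \<and> continuous_on UNIV D)"

definition loc_lipschitz_on :: "'a::metric_space set \<Rightarrow> ('a \<Rightarrow> 'b::metric_space) \<Rightarrow> bool" where
  "loc_lipschitz_on X F \<longleftrightarrow>
     (\<forall>x\<in>X. \<exists>e>0. \<exists>L. \<forall>y\<in>ball x e \<inter> X. \<forall>w\<in>ball x e \<inter> X. dist (F y) (F w) \<le> L * dist y w)"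

definition nonneg :: "real^'m \<Rightarrow> bool" where
  "nonneg s \<longleftrightarrow> (\<forall>i. 0 \<le> s $ i)"

definition lagr :: "(real^'n \<Rightarrow> real) \<Rightarrow> (real^'n \<Rightarrow> real^'l) \<Rightarrow> (real^'n \<Rightarrow> real^'m)
                    \<Rightarrow> real^'n \<Rightarrow> real^'l \<Rightarrow> real^'m \<Rightarrow> real" where
  "lagr c h g x lam sig = c x + lam \<bullet> h x + sig \<bullet> g x"

definition saddle_point :: "(real^'n) set \<Rightarrow> (real^'n \<Rightarrow> real) \<Rightarrow> (real^'n \<Rightarrow> real^'l)
      \<Rightarrow> (real^'n \<Rightarrow> real^'m) \<Rightarrow> (real^'n) \<times> (real^'l) \<times> (real^'m) \<Rightarrow> bool" where
  "saddle_point X c h g z \<longleftrightarrow> (case z of (xs, ls, ss) \<Rightarrow>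
      xs \<in> X \<and> nonneg ss \<and>
      (\<forall>lam sig. nonneg sig \<longrightarrow> lagr c h g xs lam sig \<le> lagr c h g xs ls ss) \<and>
      (\<forall>x\<in>X. lagr c h g xs ls ss \<le> lagr c h g x ls ss))"

definition Zset :: "(real^'n) set \<Rightarrow> ((real^'n) \<times> (real^'l) \<times> (real^'m)) set" where
  "Zset X = X \<times> UNIV \<times> {s. nonneg s}"

text \<open>Omega(z) = (grad c + grad h^T lambda + grad g^T sigma, -h x, -g x), with gh j, gg i the
  gradients of the components h_j, g_i.\<close>
definition Omega :: "(real^'n \<Rightarrow> real^'n) \<Rightarrow> (real^'n \<Rightarrow> real^'l) \<Rightarrow> ('l \<Rightarrow> real^'n \<Rightarrow> real^'n)
      \<Rightarrow> (real^'n \<Rightarrow> real^'m) \<Rightarrow> ('m \<Rightarrow> real^'n \<Rightarrow> real^'n)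
      \<Rightarrow> (real^'n) \<times> (real^'l) \<times> (real^'m) \<Rightarrow> (real^'n) \<times> (real^'l) \<times> (real^'m)" where
  "Omega gc h gh g gg z = (case z of (x, lam, sig) \<Rightarrow>
      (gc x + (\<Sum>j\<in>UNIV. lam $ j *\<^sub>R gh j x) + (\<Sum>i\<in>UNIV. sig $ i *\<^sub>R gg i x),
       - h x, - g x))"

end

theory Submission
  imports Defs
begin

text \<open>
  Apart from \<open>\<parallel>z - z*\<parallel>\<^sup>2/2\<close>, \<open>V\<close> is \<open>\<alpha>\<close> times Fukushima's regularized gap function of the
  variational inequality for \<open>\<Omega>\<close> over \<open>Z\<close>. With \<open>y = z - \<alpha>\<Omega>(z)\<close> and \<open>p = Proj\<^sub>Z y\<close>, the gap
  equals \<open>\<alpha>\<^sup>2\<parallel>\<Omega>(z)\<parallel>\<^sup>2/2 - \<parallel>y - p\<parallel>\<^sup>2/2\<close>, and the squared distance to a closed convex set is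
  differentiable with gradient \<open>2(y - p)\<close>, so \<open>V\<close> is continuously differentiable with \<open>\<Omega>\<close>.
  The projection inequality \<open>(y - p)\<bullet>(w - p) \<le> 0\<close> at \<open>w = z\<close> gives (A). Along \<open>f = p - z\<close>,
  the derivative of \<open>V\<close> plus \<open>\<alpha>(z - z*)\<bullet>\<Omega>(z)\<close> equals \<open>(y - p)\<bullet>(z* - p) - \<alpha> (D\<Omega>(z) f)\<bullet>f\<close>;
  the first term is nonpositive by the projection inequality at \<open>w = z*\<close>, the second because
  \<open>\<Omega>\<close> is monotone on \<open>Z\<close> (the Lagrangian is convex in \<open>x\<close> and affine in the multipliers),
  so its derivative is positive semidefinite in directions into \<open>Z\<close>. Finally
  \<open>(z - z*)\<bullet>\<Omega>(z) \<ge> 0\<close> follows from the saddle point inequalities and the gradient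
  inequality for the Lagrangian.
\<close>

lemma has_real_derivative_along_line:
  fixes f :: "'a::real_normed_vector \<Rightarrow> real"
  assumes "(f has_derivative f') (at x)"
  shows "((\<lambda>t. f (x + t *\<^sub>R d)) has_real_derivative f' d) (at 0)"
proof -
  have "((\<lambda>t. x + t *\<^sub>R d) has_derivative (\<lambda>t. t *\<^sub>R d)) (at 0)"
    by (auto intro!: derivative_eq_intros)
  from has_derivative_compose[OF this] assms
  have "((\<lambda>t. f (x + t *\<^sub>R d)) has_derivative (\<lambda>t. f' (t *\<^sub>R d))) (at 0)" by simp
  then show ?thesis
    using linear_scale[OF has_derivative_linear[OF assms]]
    by (simp add: has_field_derivative_def mult_commute_abs)
qed

lemma DERIV_nonpos_if_right_max:
  fixes \<phi> :: "real \<Rightarrow> real"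
  assumes "(\<phi> has_real_derivative d) (at 0)" and "\<And>t. 0 < t \<Longrightarrow> t \<le> 1 \<Longrightarrow> \<phi> t \<le> \<phi> 0"
  shows "d \<le> 0"
proof -
  have "((\<lambda>t. (\<phi> t - \<phi> 0) / t) \<longlongrightarrow> d) (at_right 0)"
    using assms(1) unfolding has_field_derivative_iff by (auto intro: tendsto_mono at_le)
  moreover have "\<forall>\<^sub>F t in at_right 0. t \<in> {0<..<(1::real)}"
    by (rule eventually_at_right_real) simp
  then have "\<forall>\<^sub>F t in at_right 0. (\<phi> t - \<phi> 0) / t \<le> 0"
    by eventually_elim (use assms(2) in \<open>auto simp: divide_nonpos_pos\<close>)
  ultimately show ?thesis by (simp add: tendsto_upperbound)
qed

lemma convex_on_has_derivative_above_tangent: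
  fixes f :: "'a::real_normed_vector \<Rightarrow> real"
  assumes "convex_on X f" and "x \<in> X" and "y \<in> X" and df: "(f has_derivative f') (at x)"
  shows "f x + f' (y - x) \<le> f y"
proof -
  define \<phi> where "\<phi> t = f (x + t *\<^sub>R (y - x)) - t * (f y - f x)" for t
  have "(\<phi> has_real_derivative f' (y - x) - (f y - f x)) (at 0)"
    unfolding \<phi>_def
    by (auto intro!: derivative_eq_intros has_real_derivative_along_line[OF df])
  moreover have "\<phi> t \<le> \<phi> 0" if "0 < t" "t \<le> 1" for t
  proof -
    have "f ((1 - t) *\<^sub>R x + t *\<^sub>R y) \<le> (1 - t) * f x + t * f y"
      using convex_onD[OF assms(1)] assms(2,3) that by simp
    then show ?thesis unfolding \<phi>_def by (simp add: algebra_simps)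
  qed
  ultimately have "f' (y - x) - (f y - f x) \<le> 0"
    by (rule DERIV_nonpos_if_right_max)
  then show ?thesis by simp
qed

lemma monotone_has_derivative_inner_nonneg:
  fixes F :: "'a::real_inner \<Rightarrow> 'a"
  assumes "convex S" and "z \<in> S" and "w \<in> S"
    and mono: "\<And>a b. a \<in> S \<Longrightarrow> b \<in> S \<Longrightarrow> 0 \<le> (F a - F b) \<bullet> (a - b)"
    and dF: "(F has_derivative F') (at z)"
  shows "0 \<le> F' (w - z) \<bullet> (w - z)"
proof -
  define \<phi> where "\<phi> t = - (F (z + t *\<^sub>R (w - z)) \<bullet> (w - z))" for t
  have "((\<lambda>u. F u \<bullet> (w - z)) has_derivative (\<lambda>v. F' v \<bullet> (w - z))) (at z)"
    by (auto intro!: derivative_eq_intros dF)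
  from has_real_derivative_along_line[OF this]
  have "(\<phi> has_real_derivative - (F' (w - z) \<bullet> (w - z))) (at 0)"
    unfolding \<phi>_def by (rule DERIV_minus)
  moreover have "\<phi> t \<le> \<phi> 0" if "0 < t" "t \<le> 1" for t
  proof -
    have "z + t *\<^sub>R (w - z) \<in> S"
      using convexD_alt[OF assms(1-3), of t] that by (simp add: algebra_simps)
    from mono[OF this assms(2)] have "0 \<le> t * ((F (z + t *\<^sub>R (w - z)) - F z) \<bullet> (w - z))"
      by simp
    then show ?thesis using that unfolding \<phi>_def by (simp add: zero_le_mult_iff inner_diff_left)
  qed
  ultimately have "- (F' (w - z) \<bullet> (w - z)) \<le> 0"
    by (rule DERIV_nonpos_if_right_max)
  then show ?thesis by simp
qed

lemma sq_dist_closest_point_remainder: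
  fixes S :: "'a::euclidean_space set"
  assumes "convex S" and "closed S" and "S \<noteq> {}"
  shows "\<bar>(norm (y + h - closest_point S (y + h)))\<^sup>2 - (norm (y - closest_point S y))\<^sup>2
          - 2 * ((y - closest_point S y) \<bullet> h)\<bar> \<le> 5 * (norm h)\<^sup>2"
proof -
  define p where "p = closest_point S y"
  define q where "q = closest_point S (y + h)"
  define r where "r = y - p"
  define s where "s = y + h - q"
  have "p \<in> S" "q \<in> S"
    unfolding p_def q_def using closest_point_in_set[OF assms(2,3)] by auto
  then have "dist (y + h) q \<le> dist (y + h) p" "dist y p \<le> dist y q"
    unfolding p_def q_def using closest_point_le[OF assms(2)] by auto
  then have up: "(norm s)\<^sup>2 \<le> (norm (r + h))\<^sup>2" and lo: "(norm r)\<^sup>2 \<le> (norm (s - h))\<^sup>2"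
    unfolding s_def r_def dist_norm by (simp_all add: algebra_simps)
  have "norm (q - p) \<le> norm h"
    using closest_point_lipschitz[OF assms, of "y + h" y] unfolding p_def q_def by (simp add: dist_norm)
  then have "norm (s - r) \<le> 2 * norm h"
    using norm_triangle_ineq4[of h "q - p"] unfolding s_def r_def by (simp add: algebra_simps)
  then have "\<bar>(s - r) \<bullet> h\<bar> \<le> 2 * (norm h)\<^sup>2"
    using Cauchy_Schwarz_ineq2[of "s - r" h] mult_right_mono[of _ _ "norm h"]
    by (fastforce simp: power2_eq_square)
  moreover have "(norm (r + h))\<^sup>2 = (norm r)\<^sup>2 + 2 * (r \<bullet> h) + (norm h)\<^sup>2"
    and "(norm (s - h))\<^sup>2 = (norm s)\<^sup>2 - 2 * (s \<bullet> h) + (norm h)\<^sup>2"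
    by (simp_all add: power2_norm_eq_inner algebra_simps inner_commute)
  ultimately have "\<bar>(norm s)\<^sup>2 - (norm r)\<^sup>2 - 2 * (r \<bullet> h)\<bar> \<le> 5 * (norm h)\<^sup>2"
    using up lo by (simp add: abs_le_iff inner_diff_left)
  then show ?thesis unfolding s_def r_def p_def q_def by (simp add: algebra_simps)
qed

lemma has_derivative_sq_dist_closest_point:
  fixes S :: "'a::euclidean_space set"
  assumes "convex S" and "closed S" and "S \<noteq> {}"
  shows "((\<lambda>y. (norm (y - closest_point S y))\<^sup>2)
           has_derivative (\<lambda>v. 2 * ((y - closest_point S y) \<bullet> v))) (at y)"
  unfolding has_derivative_at
proof
  show "bounded_linear (\<lambda>v. 2 * ((y - closest_point S y) \<bullet> v))"
    by (intro bounded_linear_intros)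
  let ?R = "\<lambda>h. (norm (y + h - closest_point S (y + h)))\<^sup>2 - (norm (y - closest_point S y))\<^sup>2
                 - 2 * ((y - closest_point S y) \<bullet> h)"
  have bound: "\<forall>h. norm (norm (?R h) / norm h) \<le> 5 * norm h"
  proof
    fix h :: 'a
    show "norm (norm (?R h) / norm h) \<le> 5 * norm h"
    proof (cases "h = 0")
      case False
      then show ?thesis using sq_dist_closest_point_remainder[OF assms, of y h]
        by (simp add: divide_le_eq power2_eq_square)
    qed simp
  qed
  have lim: "((\<lambda>h. 5 * norm h) \<longlongrightarrow> 0) (at (0::'a))"
    by (auto intro!: tendsto_eq_intros)
  show "((\<lambda>h. norm (?R h) / norm h) \<longlongrightarrow> 0) (at 0)"
    by (rule Lim_null_comparison[OF always_eventually[OF bound] lim])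
qed

lemma linear_eq_inner_Basis_sum:
  fixes f :: "'a::euclidean_space \<Rightarrow> real"
  assumes "linear f"
  shows "f v = (\<Sum>b\<in>Basis. f b *\<^sub>R b) \<bullet> v"
proof -
  have "f v = f (\<Sum>b\<in>Basis. (v \<bullet> b) *\<^sub>R b)" by (simp add: euclidean_representation)
  also have "\<dots> = (\<Sum>b\<in>Basis. (v \<bullet> b) * f b)"
    by (simp add: linear_sum[OF assms] linear_scale[OF assms])
  also have "\<dots> = (\<Sum>b\<in>Basis. f b *\<^sub>R b) \<bullet> v"
    by (simp add: inner_sum_left inner_commute[of v] mult.commute)
  finally show ?thesis .
qed

definition projected_step :: "'a::euclidean_space set \<Rightarrow> real \<Rightarrow> ('a \<Rightarrow> 'a) \<Rightarrow> 'a \<Rightarrow> 'a" where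
  "projected_step S \<alpha> \<Omega> z = closest_point S (z - \<alpha> *\<^sub>R \<Omega> z)"

text \<open>\<open>\<alpha>\<close> times Fukushima's regularized gap function
  \<open>max\<^sub>w\<^sub>\<in>\<^sub>S \<Omega>(z)\<bullet>(z - w) - \<parallel>z - w\<parallel>\<^sup>2/(2\<alpha>)\<close>, whose maximizer is \<open>projected_step S \<alpha> \<Omega> z\<close>.\<close>

definition regularized_gap :: "'a::euclidean_space set \<Rightarrow> real \<Rightarrow> ('a \<Rightarrow> 'a) \<Rightarrow> 'a \<Rightarrow> real" where
  "regularized_gap S \<alpha> \<Omega> z =
     \<alpha> * ((z - projected_step S \<alpha> \<Omega> z) \<bullet> \<Omega> z) - 1/2 * (norm (z - projected_step S \<alpha> \<Omega> z))\<^sup>2"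

lemma regularized_gap_ge:
  assumes "convex S" and "closed S" and "z \<in> S"
  shows "1/2 * (norm (z - projected_step S \<alpha> \<Omega> z))\<^sup>2 \<le> regularized_gap S \<alpha> \<Omega> z"
proof -
  let ?p = "projected_step S \<alpha> \<Omega> z"
  have "(z - \<alpha> *\<^sub>R \<Omega> z - ?p) \<bullet> (z - ?p) \<le> 0"
    unfolding projected_step_def by (rule closest_point_dot[OF assms])
  then have "(z - ?p) \<bullet> (z - ?p) \<le> \<alpha> * ((z - ?p) \<bullet> \<Omega> z)"
    by (simp add: inner_diff_left inner_diff_right inner_commute algebra_simps)
  then have "(norm (z - ?p))\<^sup>2 \<le> \<alpha> * ((z - ?p) \<bullet> \<Omega> z)"
    by (simp add: power2_norm_eq_inner)
  then show ?thesis unfolding regularized_gap_def by simp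
qed

lemma regularized_gap_eq_sq_dist:
  "regularized_gap S \<alpha> \<Omega> z =
     \<alpha>\<^sup>2 / 2 * (\<Omega> z \<bullet> \<Omega> z) - 1/2 * (norm (z - \<alpha> *\<^sub>R \<Omega> z - closest_point S (z - \<alpha> *\<^sub>R \<Omega> z)))\<^sup>2"
  unfolding regularized_gap_def projected_step_def
  by (simp only: power2_norm_eq_inner)
    (simp add: inner_diff_left inner_diff_right inner_commute power2_eq_square algebra_simps)

lemma has_derivative_regularized_gap:
  assumes "convex S" and "closed S" and "S \<noteq> {}" and d\<Omega>: "(\<Omega> has_derivative D\<Omega>) (at z)"
  shows "(regularized_gap S \<alpha> \<Omega> has_derivative
           (\<lambda>v. \<alpha>\<^sup>2 * (\<Omega> z \<bullet> D\<Omega> v)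
                - (z - \<alpha> *\<^sub>R \<Omega> z - projected_step S \<alpha> \<Omega> z) \<bullet> (v - \<alpha> *\<^sub>R D\<Omega> v))) (at z)"
proof -
  have dy: "((\<lambda>z. z - \<alpha> *\<^sub>R \<Omega> z) has_derivative (\<lambda>v. v - \<alpha> *\<^sub>R D\<Omega> v)) (at z)"
    by (auto intro!: derivative_eq_intros d\<Omega>)
  have dsq: "((\<lambda>z. (norm (z - \<alpha> *\<^sub>R \<Omega> z - closest_point S (z - \<alpha> *\<^sub>R \<Omega> z)))\<^sup>2) has_derivative
          (\<lambda>v. 2 * ((z - \<alpha> *\<^sub>R \<Omega> z - projected_step S \<alpha> \<Omega> z) \<bullet> (v - \<alpha> *\<^sub>R D\<Omega> v)))) (at z)"
    using has_derivative_compose[OF dy has_derivative_sq_dist_closest_point[OF assms(1-3)]]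
    unfolding projected_step_def .
  show ?thesis
    unfolding regularized_gap_eq_sq_dist[abs_def]
    by (rule has_derivative_eq_rhs[OF has_derivative_diff[OF
          has_derivative_mult_right[OF has_derivative_inner[OF d\<Omega> d\<Omega>]]
          has_derivative_mult_right[OF dsq]]])
      (simp add: fun_eq_iff inner_commute algebra_simps power2_eq_square)
qed

lemma regularized_gap_decrease:
  fixes \<Omega> :: "'a::euclidean_space \<Rightarrow> 'a"
  assumes "convex S" and "closed S" and "z \<in> S" and "zs \<in> S" and "0 \<le> \<alpha>"
    and mono: "\<And>a b. a \<in> S \<Longrightarrow> b \<in> S \<Longrightarrow> 0 \<le> (\<Omega> a - \<Omega> b) \<bullet> (a - b)"
    and d\<Omega>: "(\<Omega> has_derivative D\<Omega>) (at z)"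
  defines "p \<equiv> projected_step S \<alpha> \<Omega> z"
  shows "(z - zs) \<bullet> (p - z) + \<alpha>\<^sup>2 * (\<Omega> z \<bullet> D\<Omega> (p - z))
           - (z - \<alpha> *\<^sub>R \<Omega> z - p) \<bullet> ((p - z) - \<alpha> *\<^sub>R D\<Omega> (p - z))
         \<le> - \<alpha> * ((z - zs) \<bullet> \<Omega> z)"
proof -
  have "S \<noteq> {}" using assms(3) by blast
  then have "p \<in> S" unfolding p_def projected_step_def by (rule closest_point_in_set[OF assms(2)])
  then have "0 \<le> D\<Omega> (p - z) \<bullet> (p - z)"
    by (rule monotone_has_derivative_inner_nonneg[OF assms(1,3) _ mono d\<Omega>])
  moreover have "(z - \<alpha> *\<^sub>R \<Omega> z - p) \<bullet> (zs - p) \<le> 0"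
    unfolding p_def projected_step_def by (rule closest_point_dot[OF assms(1,2,4)])
  moreover have "(z - zs) \<bullet> (p - z) + \<alpha>\<^sup>2 * (\<Omega> z \<bullet> D\<Omega> (p - z))
      - (z - \<alpha> *\<^sub>R \<Omega> z - p) \<bullet> ((p - z) - \<alpha> *\<^sub>R D\<Omega> (p - z)) + \<alpha> * ((z - zs) \<bullet> \<Omega> z)
    = (z - \<alpha> *\<^sub>R \<Omega> z - p) \<bullet> (zs - p) - \<alpha> * (D\<Omega> (p - z) \<bullet> (p - z))"
    by (simp add: inner_diff_left inner_diff_right inner_commute power2_eq_square algebra_simps)
  ultimately show ?thesis
    using mult_nonneg_nonneg[OF \<open>0 \<le> \<alpha>\<close>] by fastforce
qed

theorem projected_dynamics_lyapunov_derivative: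
  fixes \<Omega> :: "'a::euclidean_space \<Rightarrow> 'a" and D\<Omega> :: "'a \<Rightarrow> 'a \<Rightarrow> 'a"
  assumes "convex S" and "closed S" and "S \<noteq> {}" and "zs \<in> S" and "0 \<le> \<alpha>"
    and mono: "\<And>a b. a \<in> S \<Longrightarrow> b \<in> S \<Longrightarrow> 0 \<le> (\<Omega> a - \<Omega> b) \<bullet> (a - b)"
    and d\<Omega>: "\<And>z. (\<Omega> has_derivative D\<Omega> z) (at z)"
    and D\<Omega>_cont: "\<And>v. continuous_on UNIV (\<lambda>z. D\<Omega> z v)"
  defines "V \<equiv> \<lambda>z. 1/2 * (norm (z - zs))\<^sup>2 + regularized_gap S \<alpha> \<Omega> z"
  shows "\<exists>gV. (\<forall>z. (V has_derivative (\<lambda>v. gV z \<bullet> v)) (at z)) \<and> continuous_on UNIV gV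
            \<and> (\<forall>z\<in>S. gV z \<bullet> (projected_step S \<alpha> \<Omega> z - z) \<le> - \<alpha> * ((z - zs) \<bullet> \<Omega> z))"
proof -
  let ?p = "projected_step S \<alpha> \<Omega>"
  define V' where "V' z v = (z - zs) \<bullet> v + \<alpha>\<^sup>2 * (\<Omega> z \<bullet> D\<Omega> z v)
                        - (z - \<alpha> *\<^sub>R \<Omega> z - ?p z) \<bullet> (v - \<alpha> *\<^sub>R D\<Omega> z v)" for z v
  have dV: "(V has_derivative V' z) (at z)" for z
  proof -
    have "((\<lambda>z. 1/2 * (norm (z - zs))\<^sup>2) has_derivative (\<lambda>v. (z - zs) \<bullet> v)) (at z)"
      unfolding power2_norm_eq_inner
      by (auto intro!: derivative_eq_intros simp: inner_commute)
    from has_derivative_add[OF this has_derivative_regularized_gap[OF assms(1-3) d\<Omega>]]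
    show ?thesis unfolding V_def V'_def by (simp add: algebra_simps)
  qed
  define gV where "gV z = (\<Sum>b\<in>Basis. V' z b *\<^sub>R b)" for z
  have V'_eq: "V' z = (\<lambda>v. gV z \<bullet> v)" for z
    unfolding gV_def using linear_eq_inner_Basis_sum[OF has_derivative_linear[OF dV]] by blast
  have "continuous_on UNIV \<Omega>"
    by (intro continuous_at_imp_continuous_on ballI has_derivative_continuous[OF d\<Omega>])
  moreover have "continuous_on UNIV ?p"
    unfolding projected_step_def[abs_def]
    by (intro continuous_on_compose2[OF continuous_on_closest_point[OF assms(1-3)]]
        continuous_intros \<open>continuous_on UNIV \<Omega>\<close>) auto
  ultimately have "continuous_on UNIV gV"
    unfolding gV_def V'_def
    by (intro continuous_intros D\<Omega>_cont)
  moreover have "gV z \<bullet> (?p z - z) \<le> - \<alpha> * ((z - zs) \<bullet> \<Omega> z)" if "z \<in> S" for z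
    using regularized_gap_decrease[OF assms(1,2) that assms(4,5) mono d\<Omega>]
    by (simp add: V'_eq[symmetric] V'_def)
  ultimately show ?thesis
    using dV V'_eq by auto
qed

lemma has_derivative_vec_lambda:
  fixes f :: "'a::real_normed_vector \<Rightarrow> real^'m"
  assumes "\<And>i. ((\<lambda>x. f x $ i) has_derivative f' i) (at x)"
  shows "(f has_derivative (\<lambda>v. \<chi> i. f' i v)) (at x)"
  unfolding has_derivative_componentwise_within[of f] Basis_vec_def
  using assms by (auto simp: cart_eq_inner_axis[symmetric])

lemma closed_Zset: "closed X \<Longrightarrow> closed (Zset X)"
  unfolding Zset_def nonneg_def by (intro closed_Times closed_UNIV closed_positive_orthant)

lemma convex_Zset: "convex X \<Longrightarrow> convex (Zset X)"
  unfolding Zset_def nonneg_def by (intro convex_Times convex_UNIV) (auto simp: convex_def)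

lemma Zset_nonempty: "X \<noteq> {} \<Longrightarrow> Zset X \<noteq> {}"
  unfolding Zset_def nonneg_def by (auto intro: exI[of _ 0])

lemma saddle_point_in_Zset: "saddle_point X c h g zs \<Longrightarrow> zs \<in> Zset X"
  unfolding saddle_point_def Zset_def by (auto split: prod.splits)

lemma Omega_fst_snd:
  "Omega gc h gh g gg z =
     (gc (fst z) + (\<Sum>j\<in>UNIV. fst (snd z) $ j *\<^sub>R gh j (fst z))
        + (\<Sum>i\<in>UNIV. snd (snd z) $ i *\<^sub>R gg i (fst z)),
      - h (fst z), - g (fst z))"
  unfolding Omega_def by (simp split: prod.splits)

lemma gradient_of_affine_component:
  fixes A :: "real^'n^'l"
  assumes "((\<lambda>y. (A *v y + b) $ j) has_derivative (\<lambda>v. a \<bullet> v)) (at x)"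
  shows "a = A $ j"
proof -
  have "((\<lambda>y. (A *v y + b) $ j) has_derivative (\<lambda>v. A $ j \<bullet> v)) (at x)"
    by (auto simp: matrix_vector_mul_component intro!: derivative_eq_intros)
  from has_derivative_unique[OF assms this] show ?thesis
    by (metis vector_eq_rdot)
qed

locale smooth_convex_program =
  fixes X :: "(real^'n) set"
    and c :: "real^'n \<Rightarrow> real" and gc :: "real^'n \<Rightarrow> real^'n" and Dc :: "real^'n \<Rightarrow> (real^'n) \<Rightarrow>\<^sub>L (real^'n)"
    and A :: "real^'n^'l" and b :: "real^'l"
    and g :: "real^'n \<Rightarrow> real^'m" and gg :: "'m \<Rightarrow> real^'n \<Rightarrow> real^'n"
    and Dg :: "'m \<Rightarrow> real^'n \<Rightarrow> (real^'n) \<Rightarrow>\<^sub>L (real^'n)"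
  assumes convex_c: "convex_on X c"
    and c_deriv: "\<And>x. (c has_derivative (\<lambda>v. gc x \<bullet> v)) (at x)"
    and gc_deriv: "\<And>x. (gc has_derivative blinfun_apply (Dc x)) (at x)"
    and Dc_cont: "continuous_on UNIV Dc"
    and convex_g: "\<And>i. convex_on X (\<lambda>x. g x $ i)"
    and g_deriv: "\<And>i x. ((\<lambda>x. g x $ i) has_derivative (\<lambda>v. gg i x \<bullet> v)) (at x)"
    and gg_deriv: "\<And>i x. (gg i has_derivative blinfun_apply (Dg i x)) (at x)"
    and Dg_cont: "\<And>i. continuous_on UNIV (Dg i)"
begin

abbreviation L :: "real^'n \<Rightarrow> real^'l \<Rightarrow> real^'m \<Rightarrow> real" where
  "L \<equiv> lagr c (\<lambda>x. A *v x + b) g"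

abbreviation \<Omega> :: "(real^'n) \<times> (real^'l) \<times> (real^'m) \<Rightarrow> (real^'n) \<times> (real^'l) \<times> (real^'m)" where
  "\<Omega> \<equiv> Omega gc (\<lambda>x. A *v x + b) (\<lambda>j _. A $ j) g gg"

lemma lagr_above_tangent:
  assumes "x \<in> X" and "x' \<in> X" and "nonneg s"
  shows "L x l s + fst (\<Omega> (x, l, s)) \<bullet> (x' - x) \<le> L x' l s"
proof -
  have c: "c x + gc x \<bullet> (x' - x) \<le> c x'"
    by (rule convex_on_has_derivative_above_tangent[OF convex_c assms(1,2) c_deriv])
  have "g x $ i + gg i x \<bullet> (x' - x) \<le> g x' $ i" for i
    by (rule convex_on_has_derivative_above_tangent[OF convex_g assms(1,2) g_deriv])
  then have "(\<Sum>i\<in>UNIV. s $ i * (g x $ i + gg i x \<bullet> (x' - x))) \<le> (\<Sum>i\<in>UNIV. s $ i * g x' $ i)"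
    using \<open>nonneg s\<close> by (intro sum_mono mult_left_mono) (auto simp: nonneg_def)
  moreover have "l \<bullet> (A *v x' + b) = l \<bullet> (A *v x + b) + (\<Sum>j\<in>UNIV. l $ j * (A $ j \<bullet> (x' - x)))"
  proof -
    have "A *v x' + b = (A *v x + b) + A *v (x' - x)"
      by (simp add: matrix_vector_mult_diff_distrib)
    moreover have "l \<bullet> (A *v (x' - x)) = (\<Sum>j\<in>UNIV. l $ j * (A $ j \<bullet> (x' - x)))"
      unfolding inner_vec_def[of l] by (simp add: matrix_vector_mul_component)
    ultimately show ?thesis
      by (simp only: inner_add_right)
  qed
  moreover have "fst (\<Omega> (x, l, s)) \<bullet> (x' - x) = gc x \<bullet> (x' - x)
      + (\<Sum>j\<in>UNIV. l $ j * (A $ j \<bullet> (x' - x))) + (\<Sum>i\<in>UNIV. s $ i * (gg i x \<bullet> (x' - x)))"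
    by (simp add: Omega_def inner_add_left inner_sum_left)
  moreover have "s \<bullet> g y = (\<Sum>i\<in>UNIV. s $ i * g y $ i)" for y
    by (simp add: inner_vec_def)
  ultimately show ?thesis using c
    unfolding lagr_def by (simp add: distrib_left sum.distrib)
qed

lemma Omega_monotone:
  assumes "z1 \<in> Zset X" and "z2 \<in> Zset X"
  shows "0 \<le> (\<Omega> z1 - \<Omega> z2) \<bullet> (z1 - z2)"
proof -
  obtain x1 l1 s1 x2 l2 s2 where z: "z1 = (x1, l1, s1)" "z2 = (x2, l2, s2)"
    by (cases z1, cases z2) auto
  with assms have "x1 \<in> X" "x2 \<in> X" "nonneg s1" "nonneg s2" by (auto simp: Zset_def)
  then have "L x1 l1 s1 + fst (\<Omega> z1) \<bullet> (x2 - x1) \<le> L x2 l1 s1"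
    and "L x2 l2 s2 + fst (\<Omega> z2) \<bullet> (x1 - x2) \<le> L x1 l2 s2"
    unfolding z by (auto intro: lagr_above_tangent)
  then show ?thesis unfolding z
    by (simp add: Omega_def lagr_def inner_diff_left inner_diff_right inner_commute algebra_simps)
qed

lemma Omega_inner_saddle_point_nonneg:
  assumes "saddle_point X c (\<lambda>x. A *v x + b) g zs" and "z \<in> Zset X"
  shows "0 \<le> (z - zs) \<bullet> \<Omega> z"
proof -
  obtain x l s xs ls ss where z: "z = (x, l, s)" "zs = (xs, ls, ss)"
    by (cases z, cases zs) auto
  with assms have "x \<in> X" "nonneg s" and sad: "xs \<in> X"
      "\<And>l s. nonneg s \<Longrightarrow> L xs l s \<le> L xs ls ss" "\<And>x. x \<in> X \<Longrightarrow> L xs ls ss \<le> L x ls ss"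
    by (auto simp: Zset_def saddle_point_def)
  then have "L x l s + fst (\<Omega> z) \<bullet> (xs - x) \<le> L xs l s"
    unfolding z by (intro lagr_above_tangent)
  moreover have "L xs l s \<le> L xs ls ss" and "L xs ls ss \<le> L x ls ss"
    using sad \<open>x \<in> X\<close> \<open>nonneg s\<close> by auto
  ultimately show ?thesis unfolding z
    by (simp add: Omega_def lagr_def inner_diff_left inner_diff_right inner_commute algebra_simps)
qed

definition Omega_deriv ::
  "(real^'n) \<times> (real^'l) \<times> (real^'m) \<Rightarrow> (real^'n) \<times> (real^'l) \<times> (real^'m)
     \<Rightarrow> (real^'n) \<times> (real^'l) \<times> (real^'m)" where
  "Omega_deriv z v =
     (Dc (fst z) (fst v) + (\<Sum>j\<in>UNIV. fst (snd v) $ j *\<^sub>R A $ j)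
        + (\<Sum>i\<in>UNIV. snd (snd z) $ i *\<^sub>R Dg i (fst z) (fst v) + snd (snd v) $ i *\<^sub>R gg i (fst z)),
      - (A *v fst v), - (\<chi> i. gg i (fst z) \<bullet> fst v))"

lemma has_derivative_Omega: "(\<Omega> has_derivative Omega_deriv z) (at z)"
proof -
  have fst: "(fst has_derivative fst) (at z)"
    by (rule bounded_linear_imp_has_derivative[OF bounded_linear_fst])
  have "((\<lambda>x. A *v x + b) has_derivative (\<lambda>u. A *v u)) (at (fst z))"
    by (auto intro!: derivative_eq_intros bounded_linear_imp_has_derivative
        matrix_vector_mul_bounded_linear)
  note h = has_derivative_compose[OF fst this]
  note g = has_derivative_compose[OF fst has_derivative_vec_lambda[OF g_deriv]]
  have "((\<lambda>z. f z $ j) has_derivative (\<lambda>v. f v $ j)) (at z)" if "bounded_linear f" for f :: "_ \<Rightarrow> real^'k" and j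
    by (intro bounded_linear_imp_has_derivative bounded_linear_compose[OF bounded_linear_vec_nth that])
  note multipliers = this[OF bounded_linear_compose[OF bounded_linear_fst bounded_linear_snd]]
    this[OF bounded_linear_compose[OF bounded_linear_snd bounded_linear_snd]]
  show ?thesis
    unfolding Omega_fst_snd[abs_def] Omega_deriv_def
    by (rule has_derivative_eq_rhs,
        (rule h g multipliers has_derivative_compose[OF fst gc_deriv]
          has_derivative_compose[OF fst gg_deriv] has_derivative_Pair has_derivative_add
          has_derivative_sum has_derivative_scaleR has_derivative_minus has_derivative_const)+)
      (simp add: fun_eq_iff)
qed

lemma continuous_on_Omega_deriv: "continuous_on UNIV (\<lambda>z. Omega_deriv z v)"
proof -
  have "continuous_on UNIV (gg i)" for i
    by (intro continuous_at_imp_continuous_on ballI has_derivative_continuous[OF gg_deriv])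
  then have "continuous_on UNIV (\<lambda>z. gg i (fst z))" for i
    by (rule continuous_on_compose2[OF _ continuous_on_fst]) auto
  moreover have "continuous_on UNIV (\<lambda>z. Dc (fst z))" "continuous_on UNIV (\<lambda>z. Dg i (fst z))" for i
    by (rule continuous_on_compose2[OF _ continuous_on_fst], auto intro: Dc_cont Dg_cont)+
  ultimately show ?thesis
    unfolding Omega_deriv_def
    by (intro continuous_intros blinfun.continuous_on) auto
qed

end

theorem lemma2:
  fixes X :: "(real^'n) set"
    and c :: "real^'n \<Rightarrow> real" and gc :: "real^'n \<Rightarrow> real^'n"
    and h :: "real^'n \<Rightarrow> real^'l" and gh :: "'l \<Rightarrow> real^'n \<Rightarrow> real^'n"
    and g :: "real^'n \<Rightarrow> real^'m" and gg :: "'m \<Rightarrow> real^'n \<Rightarrow> real^'n"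
    and \<alpha> :: real
    and zs :: "(real^'n) \<times> (real^'l) \<times> (real^'m)"
    and Z :: "((real^'n) \<times> (real^'l) \<times> (real^'m)) set"
    and \<Omega> :: "(real^'n) \<times> (real^'l) \<times> (real^'m) \<Rightarrow> (real^'n) \<times> (real^'l) \<times> (real^'m)"
    and P :: "(real^'n) \<times> (real^'l) \<times> (real^'m) \<Rightarrow> (real^'n) \<times> (real^'l) \<times> (real^'m)"
    and F :: "(real^'n) \<times> (real^'l) \<times> (real^'m) \<Rightarrow> (real^'n) \<times> (real^'l) \<times> (real^'m)"
    and V :: "(real^'n) \<times> (real^'l) \<times> (real^'m) \<Rightarrow> real"
  assumes X_ne: "X \<noteq> {}" and X_closed: "closed X" and X_convex: "convex X"
    and c_convex: "convex_on X c" and c_C2: "C2_with_grad c gc" and c_lip: "loc_lipschitz_on X gc"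
    and g_convex: "\<forall>i. convex_on X (\<lambda>x. g x $ i)"
    and g_C2: "\<forall>i. C2_with_grad (\<lambda>x. g x $ i) (gg i)"
    and g_lip: "\<forall>i. loc_lipschitz_on X (gg i)"
    and h_affine: "\<exists>(A :: real^'n^'l) b. \<forall>x. h x = A *v x + b"
    and h_grad: "\<forall>j x. ((\<lambda>y. h y $ j) has_derivative (\<lambda>v. gh j x \<bullet> v)) (at x)"
    and feasible: "\<exists>x\<in>X. h x = 0 \<and> (\<forall>i. g x $ i \<le> 0)"
    and slater: "\<exists>x\<in>rel_interior X. h x = 0 \<and> (\<forall>i. g x $ i < 0)"
    and alpha_pos: "\<alpha> > 0"
    and saddle: "saddle_point X c h g zs"
  defines "Z \<equiv> Zset X"
    and "\<Omega> \<equiv> Omega gc h gh g gg"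
    and "P \<equiv> (\<lambda>z. closest_point Z (z - \<alpha> *\<^sub>R \<Omega> z))"
    and "F \<equiv> (\<lambda>z. P z - z)"
    and "V \<equiv> (\<lambda>z. (1/2) * (norm (z - zs))\<^sup>2 + \<alpha> * ((z - P z) \<bullet> \<Omega> z)
                    - (1/2) * (norm (z - P z))\<^sup>2)"
  shows "(\<forall>z\<in>Z. V z \<ge> (1/2) * ((norm (z - P z))\<^sup>2 + (norm (z - zs))\<^sup>2)
                \<and> (1/2) * ((norm (z - P z))\<^sup>2 + (norm (z - zs))\<^sup>2) \<ge> 0)
       \<and> (\<exists>gV. (\<forall>z\<in>Z. (V has_derivative (\<lambda>v. gV z \<bullet> v)) (at z))
               \<and> continuous_on Z gV
               \<and> (\<forall>z\<in>Z. gV z \<bullet> F z \<le> - \<alpha> * ((z - zs) \<bullet> \<Omega> z)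
                        \<and> - \<alpha> * ((z - zs) \<bullet> \<Omega> z) \<le> 0))"
proof -
  obtain A b where h_eq: "h = (\<lambda>x. A *v x + b)"
    using h_affine by blast
  have gh_eq: "gh = (\<lambda>j _. A $ j)"
    using h_grad gradient_of_affine_component unfolding h_eq by blast
  obtain Dc where "\<And>x. (c has_derivative (\<lambda>v. gc x \<bullet> v)) (at x)"
      "\<And>x. (gc has_derivative blinfun_apply (Dc x)) (at x)" "continuous_on UNIV Dc"
    using c_C2 unfolding C2_with_grad_def by blast
  moreover obtain Dg where "\<And>i x. ((\<lambda>x. g x $ i) has_derivative (\<lambda>v. gg i x \<bullet> v)) (at x)"
      "\<And>i x. (gg i has_derivative blinfun_apply (Dg i x)) (at x)" "\<And>i. continuous_on UNIV (Dg i)"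
    using g_C2 unfolding C2_with_grad_def by metis
  ultimately interpret smooth_convex_program X c gc Dc A b g gg Dg
    using c_convex g_convex by unfold_locales auto
  have Z: "convex Z" "closed Z" "Z \<noteq> {}" "zs \<in> Z"
    unfolding Z_def using X_convex X_closed X_ne saddle
    by (auto intro: convex_Zset closed_Zset Zset_nonempty saddle_point_in_Zset)
  have P_eq: "P = projected_step Z \<alpha> \<Omega>"
    unfolding P_def projected_step_def ..
  have V_eq: "V = (\<lambda>z. 1/2 * (norm (z - zs))\<^sup>2 + regularized_gap Z \<alpha> \<Omega> z)"
    unfolding V_def P_eq regularized_gap_def by (simp add: fun_eq_iff)
  have \<Omega>_eq: "\<Omega> = Omega gc (\<lambda>x. A *v x + b) (\<lambda>j _. A $ j) g gg"
    unfolding \<Omega>_def h_eq gh_eq ..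
  have VI: "0 \<le> (z - zs) \<bullet> \<Omega> z" if "z \<in> Z" for z
    using Omega_inner_saddle_point_nonneg saddle that unfolding \<Omega>_eq Z_def h_eq by blast
  obtain gV where "\<forall>z. (V has_derivative (\<lambda>v. gV z \<bullet> v)) (at z)" "continuous_on UNIV gV"
      "\<forall>z\<in>Z. gV z \<bullet> F z \<le> - \<alpha> * ((z - zs) \<bullet> \<Omega> z)"
    using projected_dynamics_lyapunov_derivative[OF Z _ Omega_monotone has_derivative_Omega
        continuous_on_Omega_deriv, of \<alpha>] alpha_pos
    unfolding V_eq F_def P_eq \<Omega>_eq Z_def by auto
  moreover have "1/2 * (norm (z - P z))\<^sup>2 \<le> regularized_gap Z \<alpha> \<Omega> z" if "z \<in> Z" for z
    unfolding P_eq using regularized_gap_ge[OF Z(1,2) that] .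
  ultimately show ?thesis
    using VI alpha_pos unfolding V_eq
    by (auto intro!: exI[of _ gV] continuous_on_subset[of UNIV] mult_nonneg_nonneg)
qed

end
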